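(* Let $\mathcal L:\mathbb R^V\supset\mathrm{Dom}(\mathcal L)\to\mathbb R^V$ be a linear operator with $\mathcal C_{\mathrm{fs}}(\mathcal G)\subset\mathrm{Dom}(\mathcal L)$ such that (1) $\mathcal L$ is a rough differential operator, and (2) $\mathcal L$ satisfies a two-sided rough comparison principle. Then ${}^{\mathcal O}\mathrm{Ric}_{\mathcal L}(x,y)$ is finite for all distinct $x,y\in V$.
   Context: $\mathcal G$ is a locally finite graph with vertex set $V$ and a distance $\mathrm d$ on $V$ with $(V,\mathrm d)$ complete. $\mathcal C_{\mathrm{fs}}(\mathcal G)$ = finitely supported functions on $V$; $\mathrm{Lip}(1)$ = functions with $|f(u)-f(v)|\le\mathrm d(u,v)$; $\nabla_{xy}f=(f(y)-f(x))/\mathrm d(x,y)$. The operator-theoretic Ollivier–Ricci curvature is \[ {}^{\mathcal O}\mathrm{Ric}_{\mathcal L}(x,y):=\inf\{\nabla_{yx}\mathcal Lf:\ f\in\mathcal C_{\mathrm{fs}}(\mathcal G)\cap\mathrm{Lip}(1),\ \nabla_{xy}f=1\}. \] $\mathcal L$ is a rough differential operator if constants lie in its domain and kernel ($\mathcal L1=0$). $\mathcal L$ satisfies a two-sided rough comparison principle if there is a function $C:V\to[0,\infty)$ such that for every $f\in\mathrm{Dom}(\mathcal L)\cap\mathrm{Lip}(1)$ having a global minimum at $x$, $|\mathcal Lf(x)|\le C(x)$. *)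

theory Defs
  imports Complex_Main "HOL-Library.Extended_Real"
begin

text \<open>Vertex set V is the (arbitrary) type 'v; the graph is a symmetric,
irreflexive, locally finite edge relation E.\<close>

definition locally_finite_graph :: "('v \<Rightarrow> 'v \<Rightarrow> bool) \<Rightarrow> bool" where
  "locally_finite_graph E \<longleftrightarrow>
     (\<forall>x y. E x y \<longrightarrow> E y x) \<and> (\<forall>x. \<not> E x x) \<and> (\<forall>x. finite {y. E x y})"

definition is_metric :: "('v \<Rightarrow> 'v \<Rightarrow> real) \<Rightarrow> bool" where
  "is_metric d \<longleftrightarrow>
     (\<forall>x y. 0 \<le> d x y) \<and> (\<forall>x y. d x y = 0 \<longleftrightarrow> x = y) \<and>
     (\<forall>x y. d x y = d y x) \<and> (\<forall>x y z. d x z \<le> d x y + d y z)"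

definition complete_dist :: "('v \<Rightarrow> 'v \<Rightarrow> real) \<Rightarrow> bool" where
  "complete_dist d \<longleftrightarrow>
     (\<forall>X :: nat \<Rightarrow> 'v.
        (\<forall>e>0. \<exists>N. \<forall>m\<ge>N. \<forall>n\<ge>N. d (X m) (X n) < e) \<longrightarrow>
        (\<exists>l. \<forall>e>0. \<exists>N. \<forall>n\<ge>N. d (X n) l < e))"

definition walk :: "('v \<Rightarrow> 'v \<Rightarrow> bool) \<Rightarrow> 'v list \<Rightarrow> bool" where
  "walk E xs \<longleftrightarrow> xs \<noteq> [] \<and> (\<forall>i. Suc i < length xs \<longrightarrow> E (xs ! i) (xs ! Suc i))"

definition walk_length :: "('v \<Rightarrow> 'v \<Rightarrow> real) \<Rightarrow> 'v list \<Rightarrow> real" where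
  "walk_length d xs = (\<Sum>i<length xs - 1. d (xs ! i) (xs ! Suc i))"

definition graph_distance :: "('v \<Rightarrow> 'v \<Rightarrow> bool) \<Rightarrow> ('v \<Rightarrow> 'v \<Rightarrow> real) \<Rightarrow> bool" where
  "graph_distance E d \<longleftrightarrow> is_metric d \<and>
     (\<forall>x y. (\<exists>xs. walk E xs \<and> hd xs = x \<and> last xs = y) \<and>
            d x y = Inf {walk_length d xs | xs. walk E xs \<and> hd xs = x \<and> last xs = y})"

definition finitely_supported :: "('v \<Rightarrow> real) \<Rightarrow> bool" where
  "finitely_supported f \<longleftrightarrow> finite {v. f v \<noteq> 0}"

definition lip1 :: "('v \<Rightarrow> 'v \<Rightarrow> real) \<Rightarrow> ('v \<Rightarrow> real) \<Rightarrow> bool" where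
  "lip1 d f \<longleftrightarrow> (\<forall>u v. \<bar>f u - f v\<bar> \<le> d u v)"

definition nabla :: "('v \<Rightarrow> 'v \<Rightarrow> real) \<Rightarrow> 'v \<Rightarrow> 'v \<Rightarrow> ('v \<Rightarrow> real) \<Rightarrow> real" where
  "nabla d x y f = (f y - f x) / d x y"

text \<open>Operator Ollivier--Ricci curvature, as an extended real (Inf of the empty set is +\<infinity>).\<close>

definition ORic :: "('v \<Rightarrow> 'v \<Rightarrow> real) \<Rightarrow> (('v \<Rightarrow> real) \<Rightarrow> ('v \<Rightarrow> real)) \<Rightarrow> 'v \<Rightarrow> 'v \<Rightarrow> ereal" where
  "ORic d L x y = Inf {ereal (nabla d y x (L f)) | f.
      finitely_supported f \<and> lip1 d f \<and> nabla d x y f = 1}"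

definition linear_operator :: "('v \<Rightarrow> real) set \<Rightarrow> (('v \<Rightarrow> real) \<Rightarrow> ('v \<Rightarrow> real)) \<Rightarrow> bool" where
  "linear_operator Dom L \<longleftrightarrow>
     (\<lambda>_. 0) \<in> Dom \<and>
     (\<forall>f\<in>Dom. \<forall>g\<in>Dom. (\<lambda>v. f v + g v) \<in> Dom \<and> L (\<lambda>v. f v + g v) = (\<lambda>v. L f v + L g v)) \<and>
     (\<forall>f\<in>Dom. \<forall>c::real. (\<lambda>v. c * f v) \<in> Dom \<and> L (\<lambda>v. c * f v) = (\<lambda>v. c * L f v))"

definition rough_differential_operator :: "('v \<Rightarrow> real) set \<Rightarrow> (('v \<Rightarrow> real) \<Rightarrow> ('v \<Rightarrow> real)) \<Rightarrow> bool" where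
  "rough_differential_operator Dom L \<longleftrightarrow> (\<forall>c::real. (\<lambda>_. c) \<in> Dom) \<and> L (\<lambda>_. 1) = (\<lambda>_. 0)"

definition two_sided_rough_comparison ::
  "('v \<Rightarrow> 'v \<Rightarrow> real) \<Rightarrow> ('v \<Rightarrow> real) set \<Rightarrow> (('v \<Rightarrow> real) \<Rightarrow> ('v \<Rightarrow> real)) \<Rightarrow> bool" where
  "two_sided_rough_comparison d Dom L \<longleftrightarrow>
     (\<exists>C :: 'v \<Rightarrow> real. (\<forall>x. 0 \<le> C x) \<and>
        (\<forall>f x. f \<in> Dom \<and> lip1 d f \<and> (\<forall>v. f x \<le> f v) \<longrightarrow> \<bar>L f x\<bar> \<le> C x))"

end

theory Submission
  imports Defs
begin

text \<open>
  Upper bound: the bump \<open>max (d x y - d y v) 0\<close> is an admissible function. It has finite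
  support because in a locally finite graph with a complete path metric every open ball is
  finite: an infinite ball yields, Koenig-style, an infinite walk of bounded total length, i.e. a
  Cauchy sequence of vertices; as vertices are isolated it is eventually constant, which is
  impossible along a walk in a loopless graph.

  Lower bound: for finitely supported 1-Lipschitz \<open>f\<close> and any vertex \<open>z\<close>, write
  \<open>f - f z = p - q\<close> with \<open>p, q \<ge> 0\<close> 1-Lipschitz and vanishing at \<open>z\<close>. Both attain their
  minimum at \<open>z\<close>, so the comparison principle gives \<open>\<bar>L f z\<bar> \<le> 2 C z\<close>, whence
  \<open>\<nabla>\<^sub>y\<^sub>x L f \<ge> -2 (C x + C y) / d x y\<close>.
\<close>

lemma walk_Cons_Cons_iff: "walk E (u # w # rest) \<longleftrightarrow> E u w \<and> walk E (w # rest)"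
  unfolding walk_def by (auto simp: nth_Cons split: nat.splits)

lemma walk_from_cases:
  assumes "walk E xs" "hd xs = u"
  obtains "xs = [u]" | w rest where "xs = u # w # rest" "E u w" "walk E (w # rest)"
  using assms
proof (cases xs rule: remdups_adj.cases)
  case 1
  then show ?thesis using assms(1) by (simp add: walk_def)
next
  case (3 x y rest)
  then show ?thesis using assms that(2) by (simp add: walk_Cons_Cons_iff)
qed (use that in simp)

lemma walk_length_Cons_Cons [simp]:
  "walk_length d (u # w # rest) = d u w + walk_length d (w # rest)"
  unfolding walk_length_def by (simp add: sum.lessThan_Suc_shift del: sum.lessThan_Suc)

lemma is_metric_nonneg: "is_metric d \<Longrightarrow> 0 \<le> d x y"
  and is_metric_eq_0_iff: "is_metric d \<Longrightarrow> d x y = 0 \<longleftrightarrow> x = y"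
  and is_metric_sym: "is_metric d \<Longrightarrow> d x y = d y x"
  and is_metric_triangle: "is_metric d \<Longrightarrow> d x z \<le> d x y + d y z"
  unfolding is_metric_def by blast+

lemma is_metric_pos: "is_metric d \<Longrightarrow> x \<noteq> y \<Longrightarrow> 0 < d x y"
  using is_metric_nonneg is_metric_eq_0_iff by (metis less_eq_real_def)

lemma walk_length_nonneg: "is_metric d \<Longrightarrow> 0 \<le> walk_length d xs"
  unfolding walk_length_def by (simp add: sum_nonneg is_metric_nonneg)

lemma graph_distance_is_metric: "graph_distance E d \<Longrightarrow> is_metric d"
  unfolding graph_distance_def by blast

lemma graph_distance_short_walk:
  assumes "graph_distance E d" "d u v < r"
  shows "\<exists>xs. walk E xs \<and> hd xs = u \<and> last xs = v \<and> walk_length d xs < r"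
proof -
  let ?S = "{walk_length d xs | xs. walk E xs \<and> hd xs = u \<and> last xs = v}"
  have "\<exists>xs. walk E xs \<and> hd xs = u \<and> last xs = v" and "d u v = Inf ?S"
    using assms(1) unfolding graph_distance_def by blast+
  then have "?S \<noteq> {}" and "Inf ?S < r"
    using assms(2) by auto
  then obtain s where "s \<in> ?S" "s < r"
    by (meson cInf_lessD)
  then show ?thesis
    by blast
qed

lemma graph_distance_isolated:
  assumes E: "locally_finite_graph E" and d: "graph_distance E d"
  shows "\<exists>\<delta>>0. \<forall>v. v \<noteq> l \<longrightarrow> \<delta> \<le> d l v"
proof -
  have metric: "is_metric d"
    using d by (rule graph_distance_is_metric)
  have irrefl: "\<not> E l l" and finite_nbhd: "finite {w. E l w}"
    using E unfolding locally_finite_graph_def by blast+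
  define \<delta> where "\<delta> = Min (insert 1 (d l ` {w. E l w}))"
  have "0 < \<delta>"
    unfolding \<delta>_def using finite_nbhd irrefl metric by (auto intro: is_metric_pos)
  have edge_ge: "\<delta> \<le> d l w" if "E l w" for w
    unfolding \<delta>_def using finite_nbhd that by simp
  have "\<delta> \<le> d l v" if "v \<noteq> l" for v
  proof (rule ccontr)
    assume "\<not> \<delta> \<le> d l v"
    then obtain xs where xs: "walk E xs" "hd xs = l" "last xs = v" "walk_length d xs < \<delta>"
      using graph_distance_short_walk[OF d] by (meson not_le)
    then show False
    proof (cases rule: walk_from_cases)
      case 1
      then show False using xs(3) that by simp
    next
      case (2 w rest)
      then have "d l w \<le> walk_length d xs"
        using walk_length_nonneg[OF metric] by simp
      then show False using edge_ge[OF \<open>E l w\<close>] xs(4) by simp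
    qed
  qed
  with \<open>0 < \<delta>\<close> show ?thesis by blast
qed

definition walk_ball :: "('v \<Rightarrow> 'v \<Rightarrow> bool) \<Rightarrow> ('v \<Rightarrow> 'v \<Rightarrow> real) \<Rightarrow> 'v \<Rightarrow> real \<Rightarrow> 'v set" where
  "walk_ball E d u r = {v. \<exists>xs. walk E xs \<and> hd xs = u \<and> last xs = v \<and> walk_length d xs < r}"

lemma ball_subset_walk_ball: "graph_distance E d \<Longrightarrow> {v. d u v < r} \<subseteq> walk_ball E d u r"
  unfolding walk_ball_def by (auto dest: graph_distance_short_walk)

lemma walk_ball_nonempty_imp_pos:
  assumes "is_metric d" "walk_ball E d u r \<noteq> {}"
  shows "0 < r"
proof -
  obtain xs where "walk_length d xs < r"
    using assms(2) unfolding walk_ball_def by blast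
  then show ?thesis
    using walk_length_nonneg[OF assms(1)] by (meson order.strict_trans1)
qed

lemma walk_ball_subset_neighbour_walk_balls:
  "walk_ball E d u r \<subseteq> insert u (\<Union>w\<in>{w. E u w}. walk_ball E d w (r - d u w))"
proof
  fix v assume "v \<in> walk_ball E d u r"
  then obtain xs where xs: "walk E xs" "hd xs = u" "last xs = v" "walk_length d xs < r"
    unfolding walk_ball_def by blast
  then show "v \<in> insert u (\<Union>w\<in>{w. E u w}. walk_ball E d w (r - d u w))"
  proof (cases rule: walk_from_cases)
    case (2 w rest)
    then have "walk E (w # rest)" "hd (w # rest) = w" "last (w # rest) = v"
      and "walk_length d (w # rest) < r - d u w"
      using xs(3,4) by auto
    then have "v \<in> walk_ball E d w (r - d u w)"
      unfolding walk_ball_def by blast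
    with \<open>E u w\<close> show ?thesis by auto
  next
    case 1
    then show ?thesis using xs(3) by simp
  qed
qed

lemma infinite_walk_ball_step:
  assumes "locally_finite_graph E" "infinite (walk_ball E d u r)"
  shows "\<exists>w. E u w \<and> infinite (walk_ball E d w (r - d u w))"
proof (rule ccontr)
  assume "\<not> ?thesis"
  then have "\<forall>w\<in>{w. E u w}. finite (walk_ball E d w (r - d u w))"
    by blast
  moreover have "finite {w. E u w}"
    using assms(1) unfolding locally_finite_graph_def by blast
  ultimately have "finite (insert u (\<Union>w\<in>{w. E u w}. walk_ball E d w (r - d u w)))"
    by simp
  then have "finite (walk_ball E d u r)"
    by (rule finite_subset[OF walk_ball_subset_neighbour_walk_balls])
  with assms(2) show False ..
qed

lemma dist_le_potential_decrease:
  assumes metric: "is_metric d"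
    and step: "\<And>n. d (u n) (u (Suc n)) \<le> r n - r (Suc n)"
    and "m \<le> n"
  shows "d (u m) (u n) \<le> r m - r n"
  using \<open>m \<le> n\<close>
proof (induction n rule: dec_induct)
  case base
  then show ?case using is_metric_eq_0_iff[OF metric, of "u m" "u m"] by simp
next
  case (step n)
  have "d (u m) (u (Suc n)) \<le> d (u m) (u n) + d (u n) (u (Suc n))"
    by (rule is_metric_triangle[OF metric])
  then show ?case using step.IH assms(2)[of n] by simp
qed

lemma bounded_variation_eventually_const:
  assumes metric: "is_metric d" and complete: "complete_dist d"
    and isolated: "\<And>l. \<exists>\<delta>>0. \<forall>v. v \<noteq> l \<longrightarrow> \<delta> \<le> d l v"
    and step: "\<And>n. d (u n) (u (Suc n)) \<le> r n - r (Suc n)"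
    and bounded: "\<And>n. 0 \<le> r n"
  shows "\<exists>N. \<forall>n\<ge>N. u n = u N"
proof -
  have "decseq r"
    using step is_metric_nonneg[OF metric] by (intro decseq_SucI) (meson diff_ge_0_iff_ge order_trans)
  then have "Cauchy r"
    using bounded decseq_convergent LIMSEQ_imp_Cauchy by blast
  have telescope: "d (u m) (u n) \<le> r m - r n" if "m \<le> n" for m n
    using dist_le_potential_decrease[of d u r m n] metric step that by blast
  have dist_le: "d (u m) (u n) \<le> \<bar>r m - r n\<bar>" for m n
  proof (cases "m \<le> n")
    case True
    then show ?thesis using telescope by fastforce
  next
    case False
    then have "d (u n) (u m) \<le> r n - r m"
      using telescope by simp
    then show ?thesis using is_metric_sym[OF metric] by (metis abs_minus_commute abs_ge_self order_trans)
  qed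
  have "\<exists>N. \<forall>m\<ge>N. \<forall>n\<ge>N. d (u m) (u n) < e" if "e > 0" for e
  proof -
    obtain N where "\<forall>m\<ge>N. \<forall>n\<ge>N. \<bar>r m - r n\<bar> < e"
      using metric_CauchyD[OF \<open>Cauchy r\<close> \<open>e > 0\<close>] by (auto simp: dist_real_def)
    then show ?thesis using dist_le order.strict_trans1 by blast
  qed
  then obtain l where lim: "\<forall>e>0. \<exists>N. \<forall>n\<ge>N. d (u n) l < e"
    using complete unfolding complete_dist_def by blast
  obtain \<delta> where "\<delta> > 0" and sep: "\<forall>v. v \<noteq> l \<longrightarrow> \<delta> \<le> d l v"
    using isolated by blast
  then obtain N where close: "\<forall>n\<ge>N. d (u n) l < \<delta>"
    using lim by blast
  have "u n = l" if "n \<ge> N" for n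
    using sep close that is_metric_sym[OF metric] by (metis not_le)
  then show ?thesis by auto
qed

lemma finite_walk_ball:
  assumes E: "locally_finite_graph E" and d: "graph_distance E d" and complete: "complete_dist d"
  shows "finite (walk_ball E d u r)"
proof (rule ccontr)
  assume "infinite (walk_ball E d u r)"
  have metric: "is_metric d"
    using d by (rule graph_distance_is_metric)
  \<comment> \<open>\<open>s n\<close> = (current vertex, remaining length budget) of an infinite walk\<close>
  obtain s where s: "\<And>n. infinite (walk_ball E d (fst (s n)) (snd (s n)))
      \<and> E (fst (s n)) (fst (s (Suc n))) \<and> snd (s (Suc n)) = snd (s n) - d (fst (s n)) (fst (s (Suc n)))"
    using dependent_nat_choice[where P = "\<lambda>_ p. infinite (walk_ball E d (fst p) (snd p))"
        and Q = "\<lambda>_ p q. E (fst p) (fst q) \<and> snd q = snd p - d (fst p) (fst q)"]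
      \<open>infinite (walk_ball E d u r)\<close> infinite_walk_ball_step[OF E]
    by fastforce
  define v where "v n = fst (s n)" for n
  define \<rho> where "\<rho> n = snd (s n)" for n
  have edge: "E (v n) (v (Suc n))" for n
    using s unfolding v_def by blast
  have "\<exists>N. \<forall>n\<ge>N. v n = v N"
  proof (rule bounded_variation_eventually_const[OF metric complete])
    show "\<exists>\<delta>>0. \<forall>w. w \<noteq> l \<longrightarrow> \<delta> \<le> d l w" for l
      by (rule graph_distance_isolated[OF E d])
    show "d (v n) (v (Suc n)) \<le> \<rho> n - \<rho> (Suc n)" for n
      using s[of n] unfolding v_def \<rho>_def by simp
    show "0 \<le> \<rho> n" for n
      using s[of n] walk_ball_nonempty_imp_pos[OF metric] unfolding \<rho>_def
      by (metis finite.emptyI less_imp_le)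
  qed
  then obtain N where "v (Suc N) = v N" by (meson le_SucI order_refl)
  with edge[of N] E show False
    unfolding locally_finite_graph_def by metis
qed

lemma finite_ball:
  assumes "locally_finite_graph E" "graph_distance E d" "complete_dist d"
  shows "finite {v. d u v < r}"
  using ball_subset_walk_ball[OF assms(2)] finite_walk_ball[OF assms] by (rule finite_subset)

lemma linear_operator_add:
  assumes "linear_operator Dom L" "f \<in> Dom" "g \<in> Dom"
  shows "(\<lambda>v. f v + g v) \<in> Dom \<and> L (\<lambda>v. f v + g v) = (\<lambda>v. L f v + L g v)"
  using assms unfolding linear_operator_def by blast

lemma linear_operator_scale:
  assumes "linear_operator Dom L" "f \<in> Dom"
  shows "(\<lambda>v. c * f v) \<in> Dom \<and> L (\<lambda>v. c * f v) = (\<lambda>v. c * L f v)"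
  using assms unfolding linear_operator_def by blast

lemma linear_operator_uminus:
  assumes "linear_operator Dom L" "f \<in> Dom"
  shows "(\<lambda>v. - f v) \<in> Dom \<and> L (\<lambda>v. - f v) = (\<lambda>v. - L f v)"
  using linear_operator_scale[OF assms, of "-1"] by simp

lemma linear_operator_diff:
  assumes "linear_operator Dom L" "f \<in> Dom" "g \<in> Dom"
  shows "(\<lambda>v. f v - g v) \<in> Dom \<and> L (\<lambda>v. f v - g v) = (\<lambda>v. L f v - L g v)"
  using linear_operator_add[OF assms(1,2), of "\<lambda>v. - g v"] linear_operator_uminus[OF assms(1,3)]
  by simp

lemma rough_differential_operator_const:
  assumes "linear_operator Dom L" "rough_differential_operator Dom L"
  shows "(\<lambda>_. c) \<in> Dom \<and> L (\<lambda>_. c) = (\<lambda>_. 0)"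
  using linear_operator_scale[OF assms(1), of "\<lambda>_. 1" c] assms(2)
  unfolding rough_differential_operator_def by simp

lemma lip1_pos_part: "lip1 d g \<Longrightarrow> lip1 d (\<lambda>v. max (g v) 0)"
  unfolding lip1_def by (smt (verit))

lemma lip1_uminus: "lip1 d g \<Longrightarrow> lip1 d (\<lambda>v. - g v)"
  unfolding lip1_def by (metis abs_minus_cancel minus_diff_eq diff_minus_eq_add uminus_add_conv_diff)

text \<open>Only one of the parts \<open>max (f - f z) 0\<close>, \<open>max (f z - f) 0\<close> need be known to lie in
  \<open>Dom\<close>: the other differs from it by \<open>f - f z\<close>.\<close>

lemma comparison_bound_of_pos_part_in_Dom:
  assumes lin: "linear_operator Dom L" and rough: "rough_differential_operator Dom L"
    and cmp: "\<And>g x. g \<in> Dom \<Longrightarrow> lip1 d g \<Longrightarrow> \<forall>v. g x \<le> g v \<Longrightarrow> \<bar>L g x\<bar> \<le> C x"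
    and f: "f \<in> Dom" "lip1 d f"
    and p: "(\<lambda>v. max (f v - f z) 0) \<in> Dom" (is "?p \<in> Dom")
  shows "\<bar>L f z\<bar> \<le> 2 * C z"
proof -
  let ?q = "\<lambda>v. max (f z - f v) 0"
  have shift: "(\<lambda>v. f v - f z) \<in> Dom \<and> L (\<lambda>v. f v - f z) = L f"
    using linear_operator_diff[OF lin f(1), of "\<lambda>_. f z"] rough_differential_operator_const[OF lin rough]
    by simp
  have "?q = (\<lambda>v. ?p v - (f v - f z))"
    by (auto simp: fun_eq_iff max_def)
  then have q: "?q \<in> Dom \<and> L ?q = (\<lambda>v. L ?p v - L f v)"
    using linear_operator_diff[OF lin p] shift by simp
  have "lip1 d (\<lambda>v. f v - f z)" "lip1 d (\<lambda>v. f z - f v)"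
    using f(2) unfolding lip1_def by (simp_all add: abs_minus_commute)
  then have "lip1 d ?p" "lip1 d ?q"
    by (simp_all add: lip1_pos_part)
  moreover have "\<forall>v. ?p z \<le> ?p v" "\<forall>v. ?q z \<le> ?q v"
    by simp_all
  ultimately have "\<bar>L ?p z\<bar> \<le> C z" "\<bar>L ?q z\<bar> \<le> C z"
    using cmp p q by blast+
  moreover have "L ?q z = L ?p z - L f z"
    using q by simp
  ultimately show ?thesis
    by linarith
qed

lemma comparison_bound_of_finitely_supported:
  assumes lin: "linear_operator Dom L" and fs: "{f. finitely_supported f} \<subseteq> Dom"
    and rough: "rough_differential_operator Dom L"
    and cmp: "\<And>g x. g \<in> Dom \<Longrightarrow> lip1 d g \<Longrightarrow> \<forall>v. g x \<le> g v \<Longrightarrow> \<bar>L g x\<bar> \<le> C x"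
    and f: "finitely_supported f" "lip1 d f"
  shows "\<bar>L f z\<bar> \<le> 2 * C z"
proof -
  have supp: "g \<in> Dom" if "{v. g v \<noteq> 0} \<subseteq> {v. f v \<noteq> 0}" for g
    using f(1) that fs unfolding finitely_supported_def by (auto dest: finite_subset)
  have "f \<in> Dom"
    using f(1) fs by blast
  show ?thesis
  proof (cases "0 \<le> f z")
    case True
    then have "(\<lambda>v. max (f v - f z) 0) \<in> Dom"
      by (intro supp) auto
    from comparison_bound_of_pos_part_in_Dom[OF lin rough cmp \<open>f \<in> Dom\<close> f(2) this]
    show ?thesis .
  next
    case False
    have neg: "(\<lambda>v. - f v) \<in> Dom"
      by (intro supp) auto
    have neg_lip1: "lip1 d (\<lambda>v. - f v)"
      using f(2) by (rule lip1_uminus)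
    have "(\<lambda>v. max (- f v - - f z) 0) \<in> Dom"
      using False by (intro supp) auto
    from comparison_bound_of_pos_part_in_Dom[OF lin rough cmp neg neg_lip1 this]
    have "\<bar>L (\<lambda>v. - f v) z\<bar> \<le> 2 * C z" .
    moreover have "L (\<lambda>v. - f v) z = - L f z"
      using linear_operator_uminus[OF lin \<open>f \<in> Dom\<close>] by simp
    ultimately show ?thesis
      by simp
  qed
qed

lemma ORic_ne_infinity:
  assumes "finitely_supported f" "lip1 d f" "nabla d x y f = 1"
  shows "ORic d L x y \<noteq> \<infinity>"
proof -
  have "ORic d L x y \<le> ereal (nabla d y x (L f))"
    unfolding ORic_def using assms by (intro Inf_lower) blast
  then show ?thesis by auto
qed

lemma ORic_ne_minus_infinity:
  assumes bound: "\<And>f z. finitely_supported f \<Longrightarrow> lip1 d f \<Longrightarrow> \<bar>L f z\<bar> \<le> K z"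
    and "0 < d y x"
  shows "ORic d L x y \<noteq> -\<infinity>"
proof -
  have "ereal (- (K x + K y) / d y x) \<le> ORic d L x y"
    unfolding ORic_def
  proof (rule Inf_greatest, clarify)
    fix f assume "finitely_supported f" "lip1 d f"
    then have "- (K x + K y) \<le> L f x - L f y"
      using bound[of f x] bound[of f y] by (simp add: abs_le_iff)
    then show "ereal (- (K x + K y) / d y x) \<le> ereal (nabla d y x (L f))"
      unfolding nabla_def using \<open>0 < d y x\<close> by (simp add: divide_right_mono)
  qed
  then show ?thesis by auto
qed

lemma admissible_function_exists:
  assumes metric: "is_metric d" and "x \<noteq> y" and finite: "finite {v. d y v < d x y}"
  shows "\<exists>f. finitely_supported f \<and> lip1 d f \<and> nabla d x y f = 1"
proof (intro exI conjI)
  let ?f = "\<lambda>v. max (d x y - d y v) 0"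
  show "finitely_supported ?f"
    using finite unfolding finitely_supported_def by (rule finite_subset[rotated]) auto
  have "lip1 d (\<lambda>v. d x y - d y v)"
    unfolding lip1_def using is_metric_triangle[OF metric] is_metric_sym[OF metric]
    by (smt (verit))
  then show "lip1 d ?f"
    by (rule lip1_pos_part)
  show "nabla d x y ?f = 1"
    unfolding nabla_def using is_metric_pos[OF metric \<open>x \<noteq> y\<close>] is_metric_sym[OF metric, of x y]
      is_metric_eq_0_iff[OF metric, of y y] by simp
qed

theorem mainTheorem14:
  fixes E :: "'v \<Rightarrow> 'v \<Rightarrow> bool"
    and d :: "'v \<Rightarrow> 'v \<Rightarrow> real"
    and Dom :: "('v \<Rightarrow> real) set"
    and L :: "('v \<Rightarrow> real) \<Rightarrow> ('v \<Rightarrow> real)"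
  assumes "locally_finite_graph E"
    and "graph_distance E d"
    and "complete_dist d"
    and "linear_operator Dom L"
    and "{f. finitely_supported f} \<subseteq> Dom"
    and "rough_differential_operator Dom L"
    and "two_sided_rough_comparison d Dom L"
  shows "\<forall>x y. x \<noteq> y \<longrightarrow> ORic d L x y \<noteq> \<infinity> \<and> ORic d L x y \<noteq> -\<infinity>"
proof (intro allI impI conjI)
  fix x y :: 'v
  assume "x \<noteq> y"
  have metric: "is_metric d"
    using assms(2) by (rule graph_distance_is_metric)
  obtain C where cmp: "\<And>g x. g \<in> Dom \<Longrightarrow> lip1 d g \<Longrightarrow> \<forall>v. g x \<le> g v \<Longrightarrow> \<bar>L g x\<bar> \<le> C x"
    using assms(7) unfolding two_sided_rough_comparison_def by blast
  obtain f where "finitely_supported f" "lip1 d f" "nabla d x y f = 1"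
    using admissible_function_exists[OF metric \<open>x \<noteq> y\<close> finite_ball[OF assms(1-3)]] by blast
  then show "ORic d L x y \<noteq> \<infinity>"
    by (rule ORic_ne_infinity)
  show "ORic d L x y \<noteq> -\<infinity>"
    using comparison_bound_of_finitely_supported[OF assms(4-6) cmp]
      is_metric_pos[OF metric \<open>x \<noteq> y\<close>[symmetric]]
    by (rule ORic_ne_minus_infinity)
qed

end
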